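(* Let $\Bbbk$ be a field, $q\in\Bbbk$ a primitive $n$-th root of unity and $k,\ell,t\in\mathbb{N}_0$ with $k,\ell,t<n$. Then: (i) if $n\le t+\ell$, then for each $0\le m<t$, $$\sum_{s=0}^{m}(-1)^sq^{\frac{s(s+1)}{2}-sm}\binom{t}{m-s}_q\binom{s}{t+\ell-n}_q=(-1)^mq^{-\frac{m(m-1)}{2}-t(t+\ell-m)}\binom{m-t+n}{\ell}_q;$$ (ii) if $\ell\le k$, then $\sum_{s=0}^{\ell}(-1)^sq^{\frac{s(s+1)}{2}-s(\ell-k)}\binom{n+\ell-k}{s}_q=\binom{k}{\ell}_q$; (iii) if $\ell\le k$, then for each $\ell\le m<n$, $$\sum_{s=0}^{m}(-1)^sq^{\frac{s(s+1)}{2}-s(\ell-k)}\binom{n+m-k}{s}_q\binom{n+m-s}{n+\ell-s}_q=\binom{k}{\ell}_q.$$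
   Context: $q$-binomials: for integers $N\ge0$ and $m$, $\binom{0}{0}_q=1$, $\binom{N}{m}_q=0$ if $m>N$ or $m<0$, and for $N\ge1$, $0\le m\le N$, $\binom{N}{m}_q=\binom{N-1}{m-1}_q+q^m\binom{N-1}{m}_q$. *)

theory Defs
  imports Main
begin

text \<open>Lower indices are natural numbers; negative lower indices never occur in the statement.\<close>
fun qbin :: "'a::field \<Rightarrow> nat \<Rightarrow> nat \<Rightarrow> 'a" where
  "qbin q 0 m = (if m = 0 then 1 else 0)"
| "qbin q (Suc N) m =
     (if m > Suc N then 0
      else (if m = 0 then 0 else qbin q N (m - 1)) + q ^ m * qbin q N m)"

definition primitive_root_of_unity :: "'a::field \<Rightarrow> nat \<Rightarrow> bool" where
  "primitive_root_of_unity q n \<longleftrightarrow>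
     0 < n \<and> q ^ n = 1 \<and> (\<forall>j. 0 < j \<and> j < n \<longrightarrow> q ^ j \<noteq> 1)"

end

theory Submission
  imports Defs
begin

(* At a primitive n-th root of unity the q-binomials satisfy the q-Lucas rule
   [n + a, b] = [a, b] + [a, b - n] and, since n - 1 - j is congruent to -j - 1 modulo n, the
   reflection [j + L, L] = (-1)^L q^(jL + L(L+1)/2) [n - 1 - j, L] for j + L < n. In each sum,
   q-Lucas cuts the range of summation and reflection turns the summands into the terms of a
   q-Vandermonde convolution [c + e, l] = sum_s q^((c-s)(l-s)) [c, s] [e, l - s]; evaluating
   the convolution and applying q-Lucas and reflection once more gives the closed forms.
   Part (ii) is the case m = l of part (iii). *)

lemma qbin_eq_0: "N < m \<Longrightarrow> qbin q N m = 0"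
  by (cases N) auto

lemma qbin_0_right [simp]: "qbin q N 0 = 1"
  by (induction N) auto

lemma qbin_self [simp]: "qbin q N N = 1"
  by (induction N) (auto simp: qbin_eq_0)

lemma qbin_Suc_Suc: "qbin q (Suc N) (Suc m) = qbin q N m + q ^ Suc m * qbin q N (Suc m)"
  by (auto simp: qbin_eq_0)

declare qbin.simps(2) [simp del]

lemma qbin_Suc_left:
  "qbin q (Suc N) m = (if m = 0 then 0 else qbin q N (m - 1)) + q ^ m * qbin q N m"
  by (cases m) (simp_all add: qbin_Suc_Suc)

lemma qbin_vandermonde:
  "qbin q (c + e) l = (\<Sum>s = 0..l. q ^ ((c - s) * (l - s)) * qbin q c s * qbin q e (l - s))"
proof (induction c arbitrary: l)
  case 0
  have "(\<Sum>s = 0..l. q ^ ((0 - s) * (l - s)) * qbin q 0 s * qbin q e (l - s))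
        = (\<Sum>s \<in> {0}. q ^ ((0 - s) * (l - s)) * qbin q 0 s * qbin q e (l - s))"
    by (rule sum.mono_neutral_right) auto
  then show ?case by simp
next
  case (Suc c)
  show ?case
  proof (cases l)
    case 0
    then show ?thesis by simp
  next
    case (Suc l')
    have low: "qbin q (c + e) l' = (\<Sum>s = 0..l. q ^ ((Suc c - s) * (l - s))
        * (if s = 0 then 0 else qbin q c (s - 1)) * qbin q e (l - s))"
      unfolding Suc sum.atLeast0_atMost_Suc_shift by (simp add: Suc.IH del: sum.cl_ivl_Suc)
    have high: "q ^ l * qbin q (c + e) l
        = (\<Sum>s = 0..l. q ^ ((Suc c - s) * (l - s)) * (q ^ s * qbin q c s) * qbin q e (l - s))"
      unfolding Suc.IH sum_distrib_left
    proof (rule sum.cong[OF refl])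
      fix s assume "s \<in> {0..l}"
      then have "s \<le> c \<Longrightarrow> l + (c - s) * (l - s) = (Suc c - s) * (l - s) + s"
        by (simp add: Suc_diff_le algebra_simps)
      then show "q ^ l * (q ^ ((c - s) * (l - s)) * qbin q c s * qbin q e (l - s)) =
            q ^ ((Suc c - s) * (l - s)) * (q ^ s * qbin q c s) * qbin q e (l - s)"
        by (cases "s \<le> c") (simp_all add: qbin_eq_0 mult_ac add_ac flip: power_add)
    qed
    have "qbin q (Suc c + e) l = qbin q (c + e) l' + q ^ l * qbin q (c + e) l"
      unfolding Suc add_Suc by (rule qbin_Suc_Suc)
    also have "\<dots>
        = (\<Sum>s = 0..l. q ^ ((Suc c - s) * (l - s)) * qbin q (Suc c) s * qbin q e (l - s))"
      unfolding low high qbin_Suc_left[of q c] by (simp add: sum.distrib[symmetric] algebra_simps)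
    finally show ?thesis .
  qed
qed

lemma qbin_Suc_Suc': "qbin q (Suc N) (Suc m) = q ^ (N - m) * qbin q N m + qbin q N (Suc m)"
proof -
  have "qbin q (N + 1) (Suc m)
      = (\<Sum>s = 0..Suc m. q ^ ((N - s) * (Suc m - s)) * qbin q N s * qbin q 1 (Suc m - s))"
    by (rule qbin_vandermonde)
  also have "\<dots>
      = (\<Sum>s \<in> {m, Suc m}. q ^ ((N - s) * (Suc m - s)) * qbin q N s * qbin q 1 (Suc m - s))"
    by (rule sum.mono_neutral_right) (auto simp: qbin_eq_0)
  finally show ?thesis by simp
qed

lemma qbin_symmetric: "k \<le> N \<Longrightarrow> qbin q N (N - k) = qbin q N k"
proof (induction N arbitrary: k)
  case 0
  then show ?case by simp
next
  case (Suc N)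
  consider "k = 0" | "k = Suc N" | k' where "k = Suc k'" "k' < N"
    using Suc.prems by (cases k) (force simp: le_less)+
  then show ?case
  proof cases
    case 3
    then obtain r where r: "N - k' = Suc r" "N - k = r" "N - r = k"
      by (metis Suc_diff_Suc diff_diff_cancel less_eq_Suc_le)
    have "qbin q (Suc N) (Suc N - k) = q ^ k * qbin q N (N - k) + qbin q N (N - k')"
      using 3 r qbin_Suc_Suc'[of q N r] by simp
    also have "\<dots> = qbin q (Suc N) k"
      using 3 Suc.IH[of k] Suc.IH[of k'] by (simp add: qbin_Suc_Suc)
    finally show ?thesis .
  qed simp_all
qed

lemma qbin_Suc_right_mult: "qbin q N (Suc L) * (1 - q ^ Suc L) = (1 - q ^ (N - L)) * qbin q N L"
  using qbin_Suc_Suc[of q N L] qbin_Suc_Suc'[of q N L] by (simp add: algebra_simps)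

lemma qbin_Suc_Suc_mult: "qbin q (Suc M) (Suc L) * (1 - q ^ Suc L) = (1 - q ^ Suc M) * qbin q M L"
proof (cases "L \<le> M")
  case True
  have "qbin q (Suc M) (Suc L) * (1 - q ^ Suc L)
      = qbin q M L * (1 - q ^ Suc L) + q ^ Suc L * (qbin q M (Suc L) * (1 - q ^ Suc L))"
    by (simp add: qbin_Suc_Suc algebra_simps)
  also have "\<dots> = qbin q M L * (1 - q ^ Suc L) + q ^ Suc L * (1 - q ^ (M - L)) * qbin q M L"
    by (simp only: qbin_Suc_right_mult mult.assoc)
  also have "q ^ Suc L * q ^ (M - L) = q ^ Suc M"
    using True by (simp flip: power_add)
  then have "qbin q M L * (1 - q ^ Suc L) + q ^ Suc L * (1 - q ^ (M - L)) * qbin q M L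
      = (1 - q ^ Suc M) * qbin q M L"
    by (auto simp: algebra_simps)
  finally show ?thesis .
qed (simp add: qbin_eq_0)

lemma primitive_root_of_unityD:
  assumes "primitive_root_of_unity q n"
  shows "0 < n" and "q ^ n = 1" and "q \<noteq> 0"
    and "0 < j \<Longrightarrow> j < n \<Longrightarrow> q ^ j \<noteq> 1"
  using assms unfolding primitive_root_of_unity_def by (auto simp: power_0_left)

lemma power_int_mult_cong_root_of_unity:
  fixes x :: "'a::field"
  assumes "x \<noteq> 0" and "x ^ n = 1" and "a + b = c + int n * d"
  shows "x powi a * x powi b = x powi c"
proof -
  have "x powi a * x powi b = x powi (c + int n * d)"
    using assms(1) by (simp add: power_int_add flip: assms(3))
  also have "\<dots> = x powi c * (x ^ n) powi d"
    using assms(1) by (simp add: power_int_add power_int_mult)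
  finally show ?thesis
    using assms(2) by simp
qed

lemma qbin_root_of_unity_eq_0:
  assumes "primitive_root_of_unity q n" and "0 < j" and "j < n"
  shows "qbin q n j = 0"
proof -
  obtain M where M: "n = Suc M"
    using assms(2,3) gr0_implies_Suc by (metis less_trans)
  obtain L where L: "j = Suc L"
    using assms(2) gr0_implies_Suc by blast
  have "qbin q n j * (1 - q ^ j) = (1 - q ^ n) * qbin q M L"
    unfolding M L by (rule qbin_Suc_Suc_mult)
  also have "\<dots> = 0"
    using primitive_root_of_unityD(2)[OF assms(1)] by simp
  finally show ?thesis
    using primitive_root_of_unityD(4)[OF assms(1-3)] by simp
qed

lemma qbin_lucas:
  assumes "primitive_root_of_unity q n"
  shows "qbin q (n + a) b = qbin q a b + (if n \<le> b then qbin q a (b - n) else 0)"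
proof -
  have vanish: "qbin q n s = 0" if "s \<noteq> 0" and "s \<noteq> n" for s
    using that qbin_root_of_unity_eq_0[OF assms, of s] qbin_eq_0[of n s q] by linarith
  let ?f = "\<lambda>s. q ^ ((n - s) * (b - s)) * qbin q n s * qbin q a (b - s)"
  have "qbin q (n + a) b = (\<Sum>s = 0..b. ?f s)"
    by (rule qbin_vandermonde)
  also have "\<dots> = (\<Sum>s \<in> {0..b} \<inter> {0, n}. ?f s)"
    by (intro sum.mono_neutral_right) (auto simp: vanish)
  also have "\<dots> = qbin q a b + (if n \<le> b then qbin q a (b - n) else 0)"
  proof (cases "n \<le> b")
    case True
    then have "{0..b} \<inter> {0, n} = {0, n}"
      by auto
    with True show ?thesis
      using primitive_root_of_unityD(1,2)[OF assms] by (simp add: power_mult)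
  next
    case False
    then have "{0..b} \<inter> {0, n} = {0}"
      by auto
    with False show ?thesis
      using primitive_root_of_unityD(2)[OF assms] by (simp add: power_mult)
  qed
  finally show ?thesis .
qed

(* Triangular numbers enter the exponent identities below only in this doubled form,
   which lets algebra verify those identities over int. *)
lemma of_nat_triangle: "2 * int (x * (x + 1) div 2) = int x * (int x + 1)"
proof -
  have "2 * (x * (x + 1) div 2) = x * (x + 1)"
    by simp
  then have "int (2 * (x * (x + 1) div 2)) = int (x * (x + 1))"
    by (rule arg_cong)
  then show ?thesis
    by (simp only: of_nat_mult of_nat_add of_nat_1 of_nat_numeral)
qed

lemma of_nat_triangle_pred: "2 * int (m * (m - 1) div 2) = int m * (int m - 1)"
proof (cases m)
  case (Suc m')
  then have "m * (m - 1) = m' * (m' + 1)"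
    by simp
  then show ?thesis
    using of_nat_triangle[of m'] Suc by simp
qed simp

lemma qbin_reflect:
  assumes "primitive_root_of_unity q n" and "j + L < n"
  shows "qbin q (j + L) L
    = (-1) ^ L * q powi (int (j * L) + int (L * (L + 1) div 2)) * qbin q (n - 1 - j) L"
  using assms(2)
proof (induction L)
  case 0
  show ?case by simp
next
  case (Suc L)
  define X where "X = int (j * L) + int (L * (L + 1) div 2)"
  define w where "w = q ^ Suc (j + L)"
  define z where "z = q ^ (n - 1 - j - L)"
  define u where "u = 1 - q ^ Suc L"
  have "Suc (j + L) + (n - 1 - j - L) = n"
    using Suc.prems by simp
  then have "w * z = 1"
    using primitive_root_of_unityD(2)[OF assms(1)] by (metis w_def z_def power_add)
  then have w_z: "1 - w = - w * (1 - z)"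
    by (simp add: algebra_simps)
  have "u \<noteq> 0"
    using Suc.prems primitive_root_of_unityD(4)[OF assms(1), of "Suc L"] by (simp add: u_def)
  have "qbin q (j + Suc L) (Suc L) * u = (1 - w) * qbin q (j + L) L"
    using qbin_Suc_Suc_mult[of q "j + L" L] by (simp add: u_def w_def)
  also have "\<dots> = (-1) ^ Suc L * q powi X * w * ((1 - z) * qbin q (n - 1 - j) L)"
    using Suc by (simp add: w_z X_def)
  also have "\<dots> = ((-1) ^ Suc L * (q powi X * w) * qbin q (n - 1 - j) (Suc L)) * u"
    using qbin_Suc_right_mult[of q "n - 1 - j" L] by (simp add: u_def z_def)
  finally have "qbin q (j + Suc L) (Suc L)
      = (-1) ^ Suc L * (q powi X * w) * qbin q (n - 1 - j) (Suc L)"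
    using \<open>u \<noteq> 0\<close> mult_right_cancel by blast
  moreover have "q powi X * w = q powi (int (j * Suc L) + int (Suc L * (Suc L + 1) div 2))"
  proof -
    have "Suc L * (Suc L + 1) div 2 = L * (L + 1) div 2 + Suc L"
      by simp
    then show ?thesis
      using primitive_root_of_unityD(3)[OF assms(1)]
      by (simp add: X_def w_def power_int_add power_add)
  qed
  ultimately show ?case
    by simp
qed

lemma qbin_convolution_summand_root_of_unity:
  fixes q :: "'a::field"
  assumes prim: "primitive_root_of_unity q n" and "d + u \<le> m" and "m < n"
  shows "(-1) ^ (u + d) * q powi (int ((u + d) * (u + d + 1) div 2) - int (u + d) * int m)
        * qbin q (u + d) d
    = (-1) ^ d * q powi (int m - int (d * (d + 1) div 2))
        * q ^ ((n - 1 - d - u) * (m - d - u)) * qbin q (n - 1 - d) u"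
proof -
  define E where "E = int ((u + d) * (u + d + 1) div 2) - int (u + d) * int m"
  define F where "F = int (d * u) + int (u * (u + 1) div 2)"
  define C where "C = int m - int (d * (d + 1) div 2)"
  have "qbin q (u + d) d = qbin q (d + u) u"
    using qbin_symmetric[of d "u + d" q] by (simp add: add.commute)
  also have "\<dots> = (-1) ^ u * q powi F * qbin q (n - 1 - d) u"
    unfolding F_def by (rule qbin_reflect[OF prim]) (use assms in auto)
  finally have reflected: "qbin q (u + d) d = (-1) ^ u * q powi F * qbin q (n - 1 - d) u" .
  have "2 * int ((u + d) * (u + d + 1) div 2) = (int u + int d) * (int u + int d + 1)"
    using of_nat_triangle[of "u + d"] by simp
  moreover have "int (n - 1 - d - u) = int n - 1 - int d - int u"
    and "int (m - d - u) = int m - int d - int u"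
    using assms by simp_all
  then have "int ((n - 1 - d - u) * (m - d - u))
      = (int n - 1 - int d - int u) * (int m - int d - int u)"
    by simp
  ultimately have
    "E + F = int ((n - 1 - d - u) * (m - d - u)) + C + int n * (int d + int u - int m)"
    unfolding E_def F_def C_def of_nat_add of_nat_mult[of d u]
    using of_nat_triangle[of u] of_nat_triangle[of d] by algebra
  then have "q powi E * q powi F = q powi (int ((n - 1 - d - u) * (m - d - u)) + C)"
    using primitive_root_of_unityD(2,3)[OF prim] by (intro power_int_mult_cong_root_of_unity)
  also have "\<dots> = q powi C * q ^ ((n - 1 - d - u) * (m - d - u))"
    using primitive_root_of_unityD(3)[OF prim]
    by (simp add: power_int_add mult.commute del: of_nat_mult)
  finally have powers: "q powi E * q powi F = q powi C * q ^ ((n - 1 - d - u) * (m - d - u))" .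
  have signs: "(-1) ^ (u + d) * (-1) ^ u = ((-1) ^ d :: 'a)"
    by (simp add: power_add)
  have "(-1) ^ (u + d) * q powi E * qbin q (u + d) d
      = ((-1) ^ (u + d) * (-1) ^ u) * (q powi E * q powi F) * qbin q (n - 1 - d) u"
    unfolding reflected by (simp only: ac_simps)
  also have "\<dots>
      = (-1) ^ d * q powi C * q ^ ((n - 1 - d - u) * (m - d - u)) * qbin q (n - 1 - d) u"
    by (simp only: signs powers mult.assoc)
  finally show ?thesis
    unfolding E_def C_def .
qed

lemma qbin_convolution_closed_form_root_of_unity:
  fixes q :: "'a::field"
  assumes prim: "primitive_root_of_unity q n"
    and "l < n" and "t < n" and "n + d = t + l" and "d \<le> m" and "m < t"
  shows "(-1) ^ d * q powi (int m - int (d * (d + 1) div 2)) * qbin q (n + (n - 1 - l)) (m - d)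
    = (-1) ^ m * q powi (- int (m * (m - 1) div 2) - int t * (int t + int l - int m))
        * qbin q (m + n - t) l"
proof -
  define K where "K = m - d"
  define C where "C = int m - int (d * (d + 1) div 2)"
  define X where "X = - int (m * (m - 1) div 2) - int t * (int t + int l - int m)"
  define G where "G = int (l * K) + int (K * (K + 1) div 2)"
  have "l + K = m + n - t"
    using assms by (simp add: K_def)
  then have "qbin q (m + n - t) l = qbin q (l + K) K"
    using qbin_symmetric[of l "l + K" q] by (simp flip: \<open>l + K = m + n - t\<close>)
  also have "\<dots> = (-1) ^ K * q powi G * qbin q (n - 1 - l) K"
    unfolding G_def
    by (rule qbin_reflect[OF prim]) (use \<open>l + K = m + n - t\<close> assms in auto)
  finally have reflected: "qbin q (m + n - t) l = (-1) ^ K * q powi G * qbin q (n - 1 - l) K" .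
  have "int d = int t + int l - int n" and "int K = int m - int d"
    using assms by (simp_all add: K_def)
  then have "X + G = C + int n * (int n + int m - 2 * int t - int l)"
    unfolding X_def G_def C_def of_nat_mult[of l K]
    using of_nat_triangle_pred[of m] of_nat_triangle[of K] of_nat_triangle[of d] by algebra
  then have powers: "q powi X * q powi G = q powi C"
    using primitive_root_of_unityD(2,3)[OF prim] by (intro power_int_mult_cong_root_of_unity)
  have "m = d + K"
    using assms by (simp add: K_def)
  then have signs: "(-1) ^ m * (-1) ^ K = ((-1) ^ d :: 'a)"
    by (simp add: power_add mult.assoc)
  have "(-1) ^ m * q powi X * qbin q (m + n - t) l
      = ((-1) ^ m * (-1) ^ K) * (q powi X * q powi G) * qbin q (n - 1 - l) K"
    unfolding reflected by (simp only: ac_simps)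
  also have "\<dots> = (-1) ^ d * q powi C * qbin q (n - 1 - l) K"
    by (simp only: signs powers)
  also have "qbin q (n - 1 - l) K = qbin q (n + (n - 1 - l)) K"
    using qbin_lucas[OF prim, of "n - 1 - l" K] assms by (simp add: K_def)
  finally show ?thesis
    unfolding X_def C_def K_def by (rule sym)
qed

lemma qbin_alternating_convolution_root_of_unity:
  fixes q :: "'a::field"
  assumes prim: "primitive_root_of_unity q n"
    and "l < n" and "t < n" and "n \<le> t + l" and "m < t"
  shows "(\<Sum>s = 0..m. (-1) ^ s * q powi (int (s * (s + 1) div 2) - int s * int m)
            * qbin q t (m - s) * qbin q s (t + l - n))
       = (-1) ^ m * q powi (- int (m * (m - 1) div 2) - int t * (int t + int l - int m))
            * qbin q (m + n - t) l"
proof -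
  define d where "d = t + l - n"
  define f where "f s = (-1) ^ s * q powi (int (s * (s + 1) div 2) - int s * int m)
            * qbin q s d * qbin q t (m - s)" for s
  show ?thesis
  proof (cases "d \<le> m")
    case False
    then have "(\<Sum>s = 0..m. f s) = 0" and "qbin q (m + n - t) l = 0"
      using assms by (auto simp: f_def d_def qbin_eq_0 intro!: sum.neutral)
    then show ?thesis
      by (simp add: f_def d_def ac_simps)
  next
    case True
    define K where "K = m - d"
    define e where "e = n - 1 - d"
    define C where "C = int m - int (d * (d + 1) div 2)"
    have summand: "f (u + d)
        = (-1) ^ d * q powi C * (q ^ ((e - u) * (K - u)) * qbin q e u * qbin q t (K - u))"
      if "u \<le> K" for u
    proof -
      have "d + u \<le> m" and "m < n"
        using that True assms by (simp_all add: K_def)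
      moreover have "m - (u + d) = K - u" and "m - d - u = K - u" and "n - 1 - d - u = e - u"
        by (simp_all add: K_def e_def)
      ultimately show ?thesis
        unfolding f_def
          qbin_convolution_summand_root_of_unity[OF prim \<open>d + u \<le> m\<close> \<open>m < n\<close>]
        by (simp only: C_def e_def mult.assoc)
    qed
    have "(\<Sum>s = 0..m. f s) = (\<Sum>s = d..m. f s)"
      by (rule sum.mono_neutral_right) (auto simp: f_def qbin_eq_0)
    also have "\<dots> = (\<Sum>u = 0..K. f (u + d))"
      using sum.shift_bounds_cl_nat_ivl[of f 0 d K] True by (simp add: K_def)
    also have "\<dots> = (-1) ^ d * q powi C * qbin q (e + t) K"
      by (simp add: summand qbin_vandermonde sum_distrib_left)
    also have "e + t = n + (n - 1 - l)"
      using assms by (simp add: e_def d_def)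
    also have "(-1) ^ d * q powi C * qbin q (n + (n - 1 - l)) K
        = (-1) ^ m * q powi (- int (m * (m - 1) div 2) - int t * (int t + int l - int m))
            * qbin q (m + n - t) l"
      unfolding C_def K_def
      by (rule qbin_convolution_closed_form_root_of_unity[OF prim])
        (use assms True in \<open>auto simp: d_def\<close>)
    finally show ?thesis
      by (simp add: f_def d_def ac_simps)
  qed
qed

lemma qbin_product_summand_root_of_unity:
  fixes q :: "'a::field"
  assumes prim: "primitive_root_of_unity q n"
    and "s \<le> l" and "l \<le> k" and "k < n" and "l \<le> m" and "m < n"
  shows "(-1) ^ s * q powi (int (s * (s + 1) div 2) - int s * (int l - int k))
        * qbin q (m - s) (l - s)
    = (-1) ^ l * q powi (int ((k - l) * l) + int (l * (l + 1) div 2))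
        * q ^ ((n + m - k - s) * (l - s)) * qbin q (n - 1 - (m - l)) (l - s)"
proof -
  define E where "E = int (s * (s + 1) div 2) - int s * (int l - int k)"
  define F where "F = int ((m - l) * (l - s)) + int ((l - s) * (l - s + 1) div 2)"
  define R where "R = int ((k - l) * l) + int (l * (l + 1) div 2)"
  have "qbin q (m - s) (l - s) = qbin q ((m - l) + (l - s)) (l - s)"
    using assms by simp
  also have "\<dots> = (-1) ^ (l - s) * q powi F * qbin q (n - 1 - (m - l)) (l - s)"
    unfolding F_def by (rule qbin_reflect[OF prim]) (use assms in auto)
  finally have reflected:
    "qbin q (m - s) (l - s) = (-1) ^ (l - s) * q powi F * qbin q (n - 1 - (m - l)) (l - s)" .
  have "2 * int ((l - s) * (l - s + 1) div 2) = (int l - int s) * (int l - int s + 1)"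
    using of_nat_triangle[of "l - s"] assms(2) by simp
  moreover have "int ((m - l) * (l - s)) = (int m - int l) * (int l - int s)"
    and "int ((n + m - k - s) * (l - s)) = (int n + int m - int k - int s) * (int l - int s)"
    and "int ((k - l) * l) = (int k - int l) * int l"
    using assms by simp_all
  ultimately have "E + F = int ((n + m - k - s) * (l - s)) + R + int n * (int s - int l)"
    unfolding E_def F_def R_def using of_nat_triangle[of s] of_nat_triangle[of l] by algebra
  then have "q powi E * q powi F = q powi (int ((n + m - k - s) * (l - s)) + R)"
    using primitive_root_of_unityD(2,3)[OF prim] by (intro power_int_mult_cong_root_of_unity)
  also have "\<dots> = q powi R * q ^ ((n + m - k - s) * (l - s))"
    using primitive_root_of_unityD(3)[OF prim]
    by (simp add: power_int_add mult.commute del: of_nat_mult)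
  finally have powers: "q powi E * q powi F = q powi R * q ^ ((n + m - k - s) * (l - s))" .
  have signs: "(-1) ^ s * (-1) ^ (l - s) = ((-1) ^ l :: 'a)"
    using assms(2) by (simp flip: power_add)
  have "(-1) ^ s * q powi E * qbin q (m - s) (l - s)
      = ((-1) ^ s * (-1) ^ (l - s)) * (q powi E * q powi F) * qbin q (n - 1 - (m - l)) (l - s)"
    unfolding reflected by (simp only: ac_simps)
  also have "\<dots>
      = (-1) ^ l * q powi R * q ^ ((n + m - k - s) * (l - s)) * qbin q (n - 1 - (m - l)) (l - s)"
    by (simp only: signs powers mult.assoc)
  finally show ?thesis
    unfolding E_def R_def .
qed

lemma qbin_alternating_sum_product_root_of_unity:
  fixes q :: "'a::field"
  assumes prim: "primitive_root_of_unity q n"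
    and "k < n" and "l \<le> k" and "l \<le> m" and "m < n"
  shows "(\<Sum>s = 0..m. (-1) ^ s * q powi (int (s * (s + 1) div 2) - int s * (int l - int k))
            * qbin q (n + m - k) s * qbin q (n + m - s) (n + l - s)) = qbin q k l"
proof -
  define N where "N = n + m - k"
  define e where "e = n - 1 - (m - l)"
  define R where "R = int ((k - l) * l) + int (l * (l + 1) div 2)"
  define E where "E s = int (s * (s + 1) div 2) - int s * (int l - int k)" for s
  have lucas: "qbin q (n + m - s) (n + l - s) = (if s \<le> l then qbin q (m - s) (l - s) else 0)"
    if "s \<le> m" for s
  proof -
    have "qbin q (m - s) (n + l - s) = 0"
      using that assms by (intro qbin_eq_0) linarith
    then have "qbin q (n + (m - s)) (n + l - s)
        = (if n \<le> n + l - s then qbin q (m - s) (n + l - s - n) else 0)"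
      by (simp add: qbin_lucas[OF prim])
    moreover have "n \<le> n + l - s \<longleftrightarrow> s \<le> l"
      using that assms by arith
    ultimately show ?thesis
      using that by (simp add: add_diff_assoc)
  qed
  have summand: "qbin q N s * ((-1) ^ s * q powi E s * qbin q (m - s) (l - s))
      = (-1) ^ l * q powi R * (q ^ ((N - s) * (l - s)) * qbin q N s * qbin q e (l - s))"
    if "s \<le> l" for s
    using qbin_product_summand_root_of_unity[OF prim that assms(3,2,4,5)]
    unfolding E_def R_def N_def e_def by (simp only: ac_simps)
  have "(\<Sum>s = 0..m. (-1) ^ s * q powi E s * qbin q N s * qbin q (n + m - s) (n + l - s))
      = (\<Sum>s = 0..l. qbin q N s * ((-1) ^ s * q powi E s * qbin q (m - s) (l - s)))"
    using assms lucas by (intro sum.mono_neutral_cong_right) (auto simp: ac_simps)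
  also have "\<dots> = (-1) ^ l * q powi R * qbin q (N + e) l"
    by (simp add: summand qbin_vandermonde sum_distrib_left)
  also have "N + e = n + (n - 1 - (k - l))"
    using assms by (simp add: N_def e_def)
  also have "qbin q (n + (n - 1 - (k - l))) l = qbin q (n - 1 - (k - l)) l"
    using qbin_lucas[OF prim, of "n - 1 - (k - l)" l] assms by simp
  also have "(-1) ^ l * q powi R * qbin q (n - 1 - (k - l)) l = qbin q ((k - l) + l) l"
    unfolding R_def by (rule qbin_reflect[OF prim, symmetric]) (use assms in auto)
  finally show ?thesis
    using assms by (simp add: E_def N_def)
qed

lemma qbin_alternating_sum_root_of_unity:
  fixes q :: "'a::field"
  assumes "primitive_root_of_unity q n" and "k < n" and "l \<le> k"
  shows "(\<Sum>s = 0..l. (-1) ^ s * q powi (int (s * (s + 1) div 2) - int s * (int l - int k))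
            * qbin q (n + l - k) s) = qbin q k l"
  using qbin_alternating_sum_product_root_of_unity[OF assms, of l] assms(2,3) by simp

theorem lemma2p5:
  fixes q :: "'a::field" and n k l t :: nat
  assumes "primitive_root_of_unity q n"
    and "k < n" and "l < n" and "t < n"
  shows "(n \<le> t + l \<longrightarrow>
           (\<forall>m < t.
              (\<Sum>s = 0..m. (-1) ^ s
                  * q powi (int (s * (s + 1) div 2) - int s * int m)
                  * qbin q t (m - s) * qbin q s (t + l - n))
              = (-1) ^ m * q powi (- int (m * (m - 1) div 2) - int t * (int t + int l - int m))
                  * qbin q (m + n - t) l))
       \<and> (l \<le> k \<longrightarrow>
           (\<Sum>s = 0..l. (-1) ^ s
                  * q powi (int (s * (s + 1) div 2) - int s * (int l - int k))
                  * qbin q (n + l - k) s) = qbin q k l)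
       \<and> (l \<le> k \<longrightarrow>
           (\<forall>m. l \<le> m \<and> m < n \<longrightarrow>
              (\<Sum>s = 0..m. (-1) ^ s
                  * q powi (int (s * (s + 1) div 2) - int s * (int l - int k))
                  * qbin q (n + m - k) s * qbin q (n + m - s) (n + l - s)) = qbin q k l))"
  using qbin_alternating_convolution_root_of_unity[OF assms(1,3,4)]
    qbin_alternating_sum_product_root_of_unity[OF assms(1,2)]
    qbin_alternating_sum_root_of_unity[OF assms(1,2)]
  by blast

end
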